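(* Let $\mathbb H=\mathbb R$ or $\mathbb C$. Assume $(\mathbf A,\mathbf b)\in\mathbb H^{m\times(d+1)}$ is affine phase retrievable for $\mathbb H^d$ and let $\Omega\subset\mathbb H^d$ be a compact set. Then there exist positive constants $C_1,C_2,c_1,c_2$ depending on $(\mathbf A,\mathbf b)$ and $\Omega$ such that for all $\mathbf x,\mathbf y\in\Omega$, $$\frac{c_1}{1+\|\mathbf x\|+\|\mathbf y\|}\|\mathbf x-\mathbf y\|\le\|\mathbf M_{\mathbf A,\mathbf b}(\mathbf x)-\mathbf M_{\mathbf A,\mathbf b}(\mathbf y)\|\le C_1\|\mathbf x-\mathbf y\|,$$ $$c_2\|\mathbf x-\mathbf y\|\le\|\mathbf M^2_{\mathbf A,\mathbf b}(\mathbf x)-\mathbf M^2_{\mathbf A,\mathbf b}(\mathbf y)\|\le C_2(1+\|\mathbf x\|+\|\mathbf y\|)\|\mathbf x-\mathbf y\|.$$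
   Context: For $\mathbf u,\mathbf v\in\mathbb H^d$, $\langle\mathbf u,\mathbf v\rangle=\sum_i\overline{u_i}v_i$; $\|\cdot\|$ is the Euclidean norm. With $\mathbf A=(\mathbf a_1,\ldots,\mathbf a_m)^\top\in\mathbb H^{m\times d}$ and $\mathbf b=(b_1,\ldots,b_m)^\top\in\mathbb H^m$, $\mathbf M_{\mathbf A,\mathbf b}(\mathbf x)=(|\langle\mathbf a_1,\mathbf x\rangle+b_1|,\ldots,|\langle\mathbf a_m,\mathbf x\rangle+b_m|)$ and $\mathbf M^2_{\mathbf A,\mathbf b}(\mathbf x)=(|\langle\mathbf a_1,\mathbf x\rangle+b_1|^2,\ldots,|\langle\mathbf a_m,\mathbf x\rangle+b_m|^2)$. $(\mathbf A,\mathbf b)$ is affine phase retrievable for $\mathbb H^d$ if $\mathbf M_{\mathbf A,\mathbf b}$ is injective on $\mathbb H^d$. *)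

theory Defs
  imports "HOL-Analysis.Analysis"
begin

text \<open>Vectors in H^d are H^'n (finite index type 'n, d = CARD('n));
  the matrix A in H^{m x d} is H^'n^'m (rows A$i are the a_i), b in H^'m.
  Inner product <u,v> = sum_i conj(u_i) v_i.\<close>

definition hinner_r :: "real^'n \<Rightarrow> real^'n \<Rightarrow> real" where
  "hinner_r u v = (\<Sum>i\<in>UNIV. u$i * v$i)"

definition hinner_c :: "complex^'n \<Rightarrow> complex^'n \<Rightarrow> complex" where
  "hinner_c u v = (\<Sum>i\<in>UNIV. cnj (u$i) * v$i)"

definition M_r :: "real^'n^'m \<Rightarrow> real^'m \<Rightarrow> real^'n \<Rightarrow> real^'m" where
  "M_r A b x = (\<chi> i. \<bar>hinner_r (A$i) x + b$i\<bar>)"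

definition M2_r :: "real^'n^'m \<Rightarrow> real^'m \<Rightarrow> real^'n \<Rightarrow> real^'m" where
  "M2_r A b x = (\<chi> i. \<bar>hinner_r (A$i) x + b$i\<bar>^2)"

definition M_c :: "complex^'n^'m \<Rightarrow> complex^'m \<Rightarrow> complex^'n \<Rightarrow> real^'m" where
  "M_c A b x = (\<chi> i. cmod (hinner_c (A$i) x + b$i))"

definition M2_c :: "complex^'n^'m \<Rightarrow> complex^'m \<Rightarrow> complex^'n \<Rightarrow> real^'m" where
  "M2_c A b x = (\<chi> i. (cmod (hinner_c (A$i) x + b$i))^2)"

definition affine_pr_r :: "real^'n^'m \<Rightarrow> real^'m \<Rightarrow> bool" where
  "affine_pr_r A b \<longleftrightarrow> inj (M_r A b)"

definition affine_pr_c :: "complex^'n^'m \<Rightarrow> complex^'m \<Rightarrow> bool" where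
  "affine_pr_c A b \<longleftrightarrow> inj (M_c A b)"

end

theory Submission
  imports Defs
begin

text \<open>Squared
  measurements satisfy M2 x - M2 y = L (x + y) (x - y) with L p linear, so for the unit vector u in
  direction x - y we get norm (M2 x - M2 y) = norm (x - y) * norm (L (x + y) u). Injectivity makes
  L p u nonzero for every u \<noteq> 0, and compactness of (\<Omega> + \<Omega>) \<times> sphere 0 1 bounds it away
  from 0. The identity a^2 - b^2 = (a + b) (a - b) then transfers this lower bound from M2
  to M, and the upper bound from M to M2, at the cost of the factor 1 + norm x + norm y.\<close>

definition entry_norms :: "'a::real_normed_vector^'m \<Rightarrow> real^'m" where
  "entry_norms v = (\<chi> j. norm (v $ j))"

definition entry_norms_sq :: "'a::real_normed_vector^'m \<Rightarrow> real^'m" where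
  "entry_norms_sq v = (\<chi> j. norm (v $ j)^2)"

lemma norm_entry_norms_diff_le: "norm (entry_norms v - entry_norms w) \<le> norm (v - w)"
  by (rule norm_le_componentwise_cart) (simp add: entry_norms_def norm_triangle_ineq3)

lemma entry_norms_sq_eq_iff: "entry_norms_sq v = entry_norms_sq w \<longleftrightarrow> entry_norms v = entry_norms w"
  by (simp add: entry_norms_sq_def entry_norms_def vec_eq_iff)

lemma norm_entry_norms_sq_diff_le:
  "norm (entry_norms_sq v - entry_norms_sq w) \<le> (norm v + norm w) * norm (entry_norms v - entry_norms w)"
proof -
  have "\<bar>norm (v$j)^2 - norm (w$j)^2\<bar> \<le> (norm v + norm w) * \<bar>norm (v$j) - norm (w$j)\<bar>" for j
  proof -
    have "norm (v$j)^2 - norm (w$j)^2 = (norm (v$j) + norm (w$j)) * (norm (v$j) - norm (w$j))"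
      by (simp add: power2_eq_square algebra_simps)
    then have "\<bar>norm (v$j)^2 - norm (w$j)^2\<bar> = (norm (v$j) + norm (w$j)) * \<bar>norm (v$j) - norm (w$j)\<bar>"
      by (simp add: abs_mult)
    also have "\<dots> \<le> (norm v + norm w) * \<bar>norm (v$j) - norm (w$j)\<bar>"
      by (intro mult_right_mono add_mono Finite_Cartesian_Product.norm_nth_le) simp
    finally show ?thesis .
  qed
  then have "norm (entry_norms_sq v - entry_norms_sq w) \<le> norm ((norm v + norm w) *\<^sub>R (entry_norms v - entry_norms w))"
    by (intro norm_le_componentwise_cart) (simp add: entry_norms_sq_def entry_norms_def abs_mult)
  then show ?thesis
    by simp
qed

lemma entry_norms_sq_diff:
  fixes v w :: "'a::real_inner^'m"
  shows "entry_norms_sq v - entry_norms_sq w = (\<chi> j. inner ((v - w) $ j) ((v + w) $ j))"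
  by (simp add: entry_norms_sq_def vec_eq_iff power2_norm_eq_inner inner_add inner_diff inner_commute)

lemma lower_lipschitz_if_difference_form:
  fixes G :: "'v::euclidean_space \<Rightarrow> 'w::euclidean_space" and L :: "'v \<Rightarrow> 'v \<Rightarrow> 'w"
  assumes "inj G" and "compact \<Omega>"
    and diff: "\<And>x y. G x - G y = L (x + y) (x - y)"
    and lin: "\<And>p. linear (L p)"
    and cont: "continuous_on UNIV (\<lambda>z. L (fst z) (snd z))"
  shows "\<exists>c>0. \<forall>x\<in>\<Omega>. \<forall>y\<in>\<Omega>. c * norm (x - y) \<le> norm (G x - G y)"
proof -
  have nonzero: "L p u \<noteq> 0" if "u \<noteq> 0" for p u
  proof -
    \<comment> \<open>every pair (p, u) is of the form (x + y, x - y)\<close>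
    define x y where "x = (1/2) *\<^sub>R (p + u)" and "y = (1/2) *\<^sub>R (p - u)"
    have "x + y = p" "x - y = u"
      by (simp_all add: x_def y_def algebra_simps flip: scaleR_2)
    then have "G x - G y = L p u"
      using diff by metis
    moreover have "G x \<noteq> G y"
      using \<open>x - y = u\<close> that \<open>inj G\<close> by (auto dest: injD)
    ultimately show ?thesis
      by (metis right_minus_eq)
  qed
  define S where "S = (\<lambda>z. L (fst z) (snd z)) ` ({x + y | x y. x \<in> \<Omega> \<and> y \<in> \<Omega>} \<times> sphere 0 1)"
  have "compact S"
    unfolding S_def using \<open>compact \<Omega>\<close>
    by (intro compact_continuous_image continuous_on_subset[OF cont] compact_Times compact_sums) auto
  moreover have "0 \<notin> S"
    using nonzero by (auto simp: S_def) (metis norm_zero zero_neq_one)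
  ultimately obtain c where "c > 0" and c: "\<And>s. s \<in> S \<Longrightarrow> c \<le> norm s"
    using separate_point_closed[OF compact_imp_closed] by (metis dist_0_norm)
  have "c * norm (x - y) \<le> norm (G x - G y)" if "x \<in> \<Omega>" "y \<in> \<Omega>" for x y
  proof (cases "x = y")
    case False
    define u where "u = (1 / norm (x - y)) *\<^sub>R (x - y)"
    have "x - y = norm (x - y) *\<^sub>R u"
      using False by (simp add: u_def)
    then have "G x - G y = norm (x - y) *\<^sub>R L (x + y) u"
      using diff lin by (metis linear_scale)
    moreover have "(x + y, u) \<in> {x + y | x y. x \<in> \<Omega> \<and> y \<in> \<Omega>} \<times> sphere 0 1"
      using that False by (auto simp: u_def)
    then have "L (x + y) u \<in> S"
      unfolding S_def by force
    ultimately show ?thesis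
      using c mult_right_mono[of c "norm (L (x + y) u)" "norm (x - y)"] by (simp add: mult.commute)
  qed simp
  with \<open>c > 0\<close> show ?thesis
    by blast
qed

lemma entry_norms_sq_affine_lower_bound:
  fixes T :: "'v::euclidean_space \<Rightarrow> 'a::real_inner^'m"
  assumes "linear T" and "inj (\<lambda>x. entry_norms (T x + b))" and "compact \<Omega>"
  shows "\<exists>c>0. \<forall>x\<in>\<Omega>. \<forall>y\<in>\<Omega>.
           c * norm (x - y) \<le> norm (entry_norms_sq (T x + b) - entry_norms_sq (T y + b))"
proof (rule lower_lipschitz_if_difference_form)
  show "inj (\<lambda>x. entry_norms_sq (T x + b))"
    using assms(2) by (simp add: inj_def entry_norms_sq_eq_iff)
  define L where "L p u = (\<chi> j. inner (T u $ j) ((T p + 2 *\<^sub>R b) $ j))" for p u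
  show "entry_norms_sq (T x + b) - entry_norms_sq (T y + b) = L (x + y) (x - y)" for x y
  proof -
    have "T x + b - (T y + b) = T (x - y)" and "T x + b + (T y + b) = T (x + y) + 2 *\<^sub>R b"
      using \<open>linear T\<close> by (simp_all add: linear_diff linear_add scaleR_2)
    then show ?thesis
      by (simp add: entry_norms_sq_diff L_def)
  qed
  show "linear (L p)" for p
    using \<open>linear T\<close> by (simp add: L_def linear_iff vec_eq_iff inner_add_left)
  have "continuous_on UNIV T"
    using \<open>linear T\<close> by (simp add: linear_continuous_on linear_linear)
  then have "continuous_on UNIV (\<lambda>z. T (fst z))" and "continuous_on UNIV (\<lambda>z. T (snd z))"
    by (auto intro: continuous_on_compose2[OF _ continuous_on_fst[OF continuous_on_id]]
                    continuous_on_compose2[OF _ continuous_on_snd[OF continuous_on_id]])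
  then show "continuous_on UNIV (\<lambda>z. L (fst z) (snd z))"
    unfolding L_def by (intro continuous_intros)
qed (use assms in auto)

lemma affine_entry_norms_bounds:
  fixes T :: "'v::euclidean_space \<Rightarrow> 'a::real_inner^'m"
  assumes "linear T" and inj: "inj (\<lambda>x. entry_norms (T x + b))" and "compact \<Omega>"
  defines "M \<equiv> \<lambda>x. entry_norms (T x + b)" and "M2 \<equiv> \<lambda>x. entry_norms_sq (T x + b)"
  shows "\<exists>C1 C2 c1 c2::real. C1 > 0 \<and> C2 > 0 \<and> c1 > 0 \<and> c2 > 0 \<and>
           (\<forall>x\<in>\<Omega>. \<forall>y\<in>\<Omega>.
              c1 / (1 + norm x + norm y) * norm (x - y) \<le> norm (M x - M y) \<and>
              norm (M x - M y) \<le> C1 * norm (x - y) \<and>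
              c2 * norm (x - y) \<le> norm (M2 x - M2 y) \<and>
              norm (M2 x - M2 y) \<le> C2 * (1 + norm x + norm y) * norm (x - y))"
proof -
  obtain B where "B > 0" and B: "\<And>x. norm (T x) \<le> B * norm x"
    using linear_bounded_pos[OF \<open>linear T\<close>] by blast
  define K where "K = B + 2 * norm b"
  have "K > 0"
    using \<open>B > 0\<close> by (simp add: K_def add_pos_nonneg)
  have M_lipschitz: "norm (M x - M y) \<le> B * norm (x - y)" for x y
  proof -
    have "norm (M x - M y) \<le> norm (T (x - y))"
      using norm_entry_norms_diff_le[of "T x + b" "T y + b"] \<open>linear T\<close>
      by (simp add: M_def linear_diff)
    then show ?thesis
      using B[of "x - y"] by (rule order_trans)
  qed
  have M2_le_M: "norm (M2 x - M2 y) \<le> K * (1 + norm x + norm y) * norm (M x - M y)" for x y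
  proof -
    have "norm (T x + b) + norm (T y + b) \<le> B * norm x + B * norm y + 2 * norm b"
      using B[of x] B[of y] norm_triangle_ineq[of "T x" b] norm_triangle_ineq[of "T y" b] by linarith
    also have "\<dots> \<le> K * (1 + norm x + norm y)"
      using \<open>B > 0\<close> by (simp add: K_def algebra_simps)
    finally show ?thesis
      using norm_entry_norms_sq_diff_le[of "T x + b" "T y + b"]
      by (simp add: M_def M2_def order_trans mult_right_mono)
  qed
  obtain c where "c > 0" and c: "\<And>x y. x \<in> \<Omega> \<Longrightarrow> y \<in> \<Omega> \<Longrightarrow> c * norm (x - y) \<le> norm (M2 x - M2 y)"
    using entry_norms_sq_affine_lower_bound[OF \<open>linear T\<close> inj \<open>compact \<Omega>\<close>] M2_def by blast
  have "c / K / (1 + norm x + norm y) * norm (x - y) \<le> norm (M x - M y)" if "x \<in> \<Omega>" "y \<in> \<Omega>" for x y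
    using c[OF that] M2_le_M[of x y] \<open>K > 0\<close>
    by (simp add: field_simps add_pos_nonneg)
  moreover have "norm (M2 x - M2 y) \<le> K * B * (1 + norm x + norm y) * norm (x - y)" for x y
  proof -
    have "K * (1 + norm x + norm y) * norm (M x - M y) \<le> K * (1 + norm x + norm y) * (B * norm (x - y))"
      using M_lipschitz \<open>K > 0\<close> by (intro mult_left_mono) auto
    then show ?thesis
      using M2_le_M[of x y] by (simp add: algebra_simps)
  qed
  ultimately show ?thesis
    using M_lipschitz c \<open>B > 0\<close> \<open>K > 0\<close> \<open>c > 0\<close>
    by (intro exI[of _ B] exI[of _ "K * B"] exI[of _ "c / K"] exI[of _ c]) auto
qed

lemma linear_vec_lambda: "(\<And>i. linear (f i)) \<Longrightarrow> linear (\<lambda>x. \<chi> i. f i x)"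
  by (simp add: linear_iff vec_eq_iff)

lemma linear_hinner_r: "linear (hinner_r a)"
  by (rule linearI) (simp_all add: hinner_r_def sum.distrib sum_distrib_left algebra_simps)

lemma linear_hinner_c: "linear (hinner_c a)"
  by (rule linearI) (simp_all add: hinner_c_def sum.distrib scaleR_sum_right algebra_simps)

lemma M_r_eq_entry_norms: "M_r A b = (\<lambda>x. entry_norms ((\<chi> i. hinner_r (A$i) x) + b))"
  by (simp add: M_r_def entry_norms_def fun_eq_iff)

lemma M2_r_eq_entry_norms_sq: "M2_r A b = (\<lambda>x. entry_norms_sq ((\<chi> i. hinner_r (A$i) x) + b))"
  by (simp add: M2_r_def entry_norms_sq_def fun_eq_iff)

lemma M_c_eq_entry_norms: "M_c A b = (\<lambda>x. entry_norms ((\<chi> i. hinner_c (A$i) x) + b))"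
  by (simp add: M_c_def entry_norms_def fun_eq_iff)

lemma M2_c_eq_entry_norms_sq: "M2_c A b = (\<lambda>x. entry_norms_sq ((\<chi> i. hinner_c (A$i) x) + b))"
  by (simp add: M2_c_def entry_norms_sq_def fun_eq_iff)

theorem theorem4p1:
  shows "(\<forall>(A::real^'n^'m) b (\<Omega>::(real^'n) set).
            affine_pr_r A b \<and> compact \<Omega> \<longrightarrow>
            (\<exists>C1 C2 c1 c2::real. C1 > 0 \<and> C2 > 0 \<and> c1 > 0 \<and> c2 > 0 \<and>
              (\<forall>x\<in>\<Omega>. \<forall>y\<in>\<Omega>.
                 c1 / (1 + norm x + norm y) * norm (x - y) \<le> norm (M_r A b x - M_r A b y) \<and>
                 norm (M_r A b x - M_r A b y) \<le> C1 * norm (x - y) \<and>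
                 c2 * norm (x - y) \<le> norm (M2_r A b x - M2_r A b y) \<and>
                 norm (M2_r A b x - M2_r A b y) \<le> C2 * (1 + norm x + norm y) * norm (x - y))))
       \<and>
         (\<forall>(A::complex^'n^'m) b (\<Omega>::(complex^'n) set).
            affine_pr_c A b \<and> compact \<Omega> \<longrightarrow>
            (\<exists>C1 C2 c1 c2::real. C1 > 0 \<and> C2 > 0 \<and> c1 > 0 \<and> c2 > 0 \<and>
              (\<forall>x\<in>\<Omega>. \<forall>y\<in>\<Omega>.
                 c1 / (1 + norm x + norm y) * norm (x - y) \<le> norm (M_c A b x - M_c A b y) \<and>
                 norm (M_c A b x - M_c A b y) \<le> C1 * norm (x - y) \<and>
                 c2 * norm (x - y) \<le> norm (M2_c A b x - M2_c A b y) \<and>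
                 norm (M2_c A b x - M2_c A b y) \<le> C2 * (1 + norm x + norm y) * norm (x - y))))"
  unfolding affine_pr_r_def affine_pr_c_def M_r_eq_entry_norms M2_r_eq_entry_norms_sq
    M_c_eq_entry_norms M2_c_eq_entry_norms_sq
  by (intro conjI allI impI; elim conjE; rule affine_entry_norms_bounds)
     (auto intro: linear_vec_lambda linear_hinner_r linear_hinner_c)

end
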